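(* Let $P$ be a separable normed space which is topologically projective in $\mathbf{Nor}$. Then $P$ has at most countable (Hamel) linear dimension.
   Context: An operator $\tau:F\to E$ is coisometric if $\|\tau\|\le1$ and for each $x\in E$, $\varepsilon>0$ there is $y\in F$ with $\tau(y)=x$, $\|y\|<\|x\|+\varepsilon$. A normed space $P$ is topologically projective in $\mathbf{Nor}$ if for every coisometric operator $\tau:F\to E$ between normed spaces and every bounded operator $\varphi:P\to E$ there is a bounded operator $\psi:P\to F$ with $\tau\psi=\varphi$. *)

theory Defs
  imports "HOL-Analysis.Analysis" "HOL-Analysis.Finite_Function_Topology"
begin

text \<open>A normed space is modelled as a linear subspace S of an ambient real vector
  space together with a function N which is a norm on S.\<close>

definition is_norm_on :: "'v::real_vector set \<Rightarrow> ('v \<Rightarrow> real) \<Rightarrow> bool" where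
  "is_norm_on S N \<longleftrightarrow> subspace S \<and>
     (\<forall>x\<in>S. 0 \<le> N x) \<and> (\<forall>x\<in>S. N x = 0 \<longleftrightarrow> x = 0) \<and>
     (\<forall>x\<in>S. \<forall>y\<in>S. N (x + y) \<le> N x + N y) \<and>
     (\<forall>x\<in>S. \<forall>c. N (c *\<^sub>R x) = \<bar>c\<bar> * N x)"

definition bounded_op ::
  "'a::real_vector set \<Rightarrow> ('a \<Rightarrow> real) \<Rightarrow> 'b::real_vector set \<Rightarrow> ('b \<Rightarrow> real) \<Rightarrow> ('a \<Rightarrow> 'b) \<Rightarrow> bool" where
  "bounded_op S1 N1 S2 N2 f \<longleftrightarrow> f ` S1 \<subseteq> S2 \<and>
     (\<forall>x\<in>S1. \<forall>y\<in>S1. f (x + y) = f x + f y) \<and>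
     (\<forall>x\<in>S1. \<forall>c. f (c *\<^sub>R x) = c *\<^sub>R f x) \<and>
     (\<exists>K. \<forall>x\<in>S1. N2 (f x) \<le> K * N1 x)"

definition coisometric ::
  "'a::real_vector set \<Rightarrow> ('a \<Rightarrow> real) \<Rightarrow> 'b::real_vector set \<Rightarrow> ('b \<Rightarrow> real) \<Rightarrow> ('a \<Rightarrow> 'b) \<Rightarrow> bool" where
  "coisometric SF NF SE NE \<tau> \<longleftrightarrow> bounded_op SF NF SE NE \<tau> \<and>
     (\<forall>y\<in>SF. NE (\<tau> y) \<le> NF y) \<and>
     (\<forall>x\<in>SE. \<forall>\<epsilon>>0. \<exists>y\<in>SF. \<tau> y = x \<and> NF y < NE x + \<epsilon>)"

text \<open>Normed spaces E, F range over all normed spaces realised as subspaces of the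
  ambient real vector space of functions (('p set, real) poly_mapping).\<close>
definition topo_projective_Nor :: "'p::real_normed_vector itself \<Rightarrow> bool" where
  "topo_projective_Nor (_::'p itself) \<longleftrightarrow>
     (\<forall>(SF :: (('p set, real) poly_mapping) set) NF (SE :: (('p set, real) poly_mapping) set) NE \<tau> (\<phi> :: 'p \<Rightarrow> (('p set, real) poly_mapping)).
        is_norm_on SF NF \<longrightarrow> is_norm_on SE NE \<longrightarrow> coisometric SF NF SE NE \<tau> \<longrightarrow>
        bounded_op UNIV norm SE NE \<phi> \<longrightarrow>
        (\<exists>\<psi>. bounded_op UNIV norm SF NF \<psi> \<and> (\<forall>x. \<tau> (\<psi> x) = \<phi> x)))"

end

theory Submission
  imports Defs
begin

(* Let P be the given normed space and fix a Hamel basis B of P.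
   Over P we build the l1-space F of finitely supported real functions on the
   nonzero points of P (a point x is the index {x}), normed by
   l1_norm a = sum_x |a x| * norm x, together with the summation map
   l1_sum a = sum_x a x *R x, which is a coisometry F -> P.  To apply the
   projectivity hypothesis, P itself is copied into the ambient function space
   by a linear injection j (Hamel coordinates), normed by norm o inv j.
   Projectivity lifts the identity of P to a bounded linear right inverse
   psi : P -> F of l1_sum.  Each coordinate x |-> psi x {q} is a continuous
   linear functional, so if it vanishes on a countable dense set it vanishes
   everywhere: hence all psi x are supported in one countable set C of indices.
   Being injective, psi maps B onto an independent subset of the span of the
   countably many unit vectors indexed by C; such a set is countable, so B is. *)

section \<open>Finitely supported real functions\<close>

lemma lookup_scaleR_poly_mapping:
  "Poly_Mapping.lookup (c *\<^sub>R (a::'a \<Rightarrow>\<^sub>0 real)) k = c * Poly_Mapping.lookup a k"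
proof -
  have "finite {i. c *\<^sub>R Poly_Mapping.lookup a i \<noteq> 0}"
    by (rule finite_subset[OF _ finite_lookup[of a]]) auto
  then show ?thesis unfolding scaleR_poly_mapping_def by simp
qed

lemma keys_scaleR_subset: "Poly_Mapping.keys (c *\<^sub>R (a::'a \<Rightarrow>\<^sub>0 real)) \<subseteq> Poly_Mapping.keys a"
  by (auto simp: in_keys_iff lookup_scaleR_poly_mapping)

lemma in_span_unit_vectors:
  assumes "Poly_Mapping.keys (a::'a \<Rightarrow>\<^sub>0 real) \<subseteq> A"
  shows "a \<in> span ((\<lambda>z. Poly_Mapping.single z 1) ` A)"
proof -
  have "a = (\<Sum>z\<in>Poly_Mapping.keys a. Poly_Mapping.lookup a z *\<^sub>R Poly_Mapping.single z 1)"
    by (rule poly_mapping_eqI)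
       (simp add: lookup_sum lookup_scaleR_poly_mapping lookup_single when_def in_keys_iff
          if_distrib[of "(*) _"] sum.delta' cong: if_cong)
  also have "\<dots> \<in> span ((\<lambda>z. Poly_Mapping.single z 1) ` A)"
    using assms by (intro span_sum span_scale span_base) auto
  finally show ?thesis .
qed

text \<open>Dimension bound: an independent set inside the span of a countable set is
  countable (each element lies in the span of a finite subset, and only finitely
  many independent vectors fit into such a span).\<close>
lemma countable_independent_in_span:
  fixes B S :: "'a::real_vector set"
  assumes indep: "independent B" and sub: "B \<subseteq> span S" and cS: "countable S"
  shows "countable B"
proof -
  have finite_part: "finite (B \<inter> span T)" if "finite T" for T
    using independent_span_bound[OF that independent_mono[OF indep]] by blast
  have "B \<subseteq> (\<Union>T\<in>{T. finite T \<and> T \<subseteq> S}. B \<inter> span T)"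
  proof
    fix b assume "b \<in> B"
    then obtain T r where T: "finite T" "T \<subseteq> S" "b = (\<Sum>a\<in>T. r a *\<^sub>R a)"
      using sub unfolding span_explicit by blast
    then have "b \<in> span T" by (simp add: span_sum span_scale span_base)
    with T \<open>b \<in> B\<close> show "b \<in> (\<Union>T\<in>{T. finite T \<and> T \<subseteq> S}. B \<inter> span T)" by blast
  qed
  moreover have "countable (\<Union>T\<in>{T. finite T \<and> T \<subseteq> S}. B \<inter> span T)"
    using countable_Collect_finite_subset[OF cS] finite_part
    by (intro countable_UN) (auto intro: countable_finite)
  ultimately show ?thesis by (rule countable_subset)
qed

section \<open>The l1-space over a normed space\<close>

definition l1_carrier :: "('p::real_normed_vector set \<Rightarrow>\<^sub>0 real) set" where
  "l1_carrier = {a. Poly_Mapping.keys a \<subseteq> {z. \<exists>x. x \<noteq> 0 \<and> z = {x}}}"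

definition l1_norm :: "('p::real_normed_vector set \<Rightarrow>\<^sub>0 real) \<Rightarrow> real" where
  "l1_norm a = (\<Sum>z\<in>Poly_Mapping.keys a. \<bar>Poly_Mapping.lookup a z\<bar> * norm (the_elem z))"

definition l1_sum :: "('p::real_normed_vector set \<Rightarrow>\<^sub>0 real) \<Rightarrow> 'p" where
  "l1_sum a = (\<Sum>z\<in>Poly_Mapping.keys a. Poly_Mapping.lookup a z *\<^sub>R the_elem z)"

lemma l1_norm_eq_sum:
  "finite A \<Longrightarrow> Poly_Mapping.keys a \<subseteq> A \<Longrightarrow>
    l1_norm a = (\<Sum>z\<in>A. \<bar>Poly_Mapping.lookup a z\<bar> * norm (the_elem z))"
  unfolding l1_norm_def by (rule sum.mono_neutral_left) (auto simp: in_keys_iff)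

lemma l1_sum_eq_sum:
  "finite A \<Longrightarrow> Poly_Mapping.keys a \<subseteq> A \<Longrightarrow>
    l1_sum a = (\<Sum>z\<in>A. Poly_Mapping.lookup a z *\<^sub>R the_elem z)"
  unfolding l1_sum_def by (rule sum.mono_neutral_left) (auto simp: in_keys_iff)

lemma l1_sum_add: "l1_sum (a + b) = l1_sum a + l1_sum b"
proof -
  let ?A = "Poly_Mapping.keys a \<union> Poly_Mapping.keys b"
  have "finite ?A" "Poly_Mapping.keys (a + b) \<subseteq> ?A" by (simp_all add: keys_add)
  then show ?thesis
    using l1_sum_eq_sum[of ?A] by (simp add: lookup_add scaleR_add_left sum.distrib)
qed

lemma l1_sum_scaleR: "l1_sum (c *\<^sub>R a) = c *\<^sub>R l1_sum a"
  using l1_sum_eq_sum[of "Poly_Mapping.keys a" "c *\<^sub>R a", OF _ keys_scaleR_subset]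
  by (simp add: lookup_scaleR_poly_mapping l1_sum_def scaleR_sum_right)

lemma l1_norm_triangle: "l1_norm (a + b) \<le> l1_norm a + l1_norm b"
proof -
  let ?A = "Poly_Mapping.keys a \<union> Poly_Mapping.keys b"
  let ?w = "\<lambda>z. norm (the_elem z)"
  have fin: "finite ?A" and keys: "Poly_Mapping.keys (a + b) \<subseteq> ?A" by (simp_all add: keys_add)
  have "l1_norm (a + b) = (\<Sum>z\<in>?A. \<bar>Poly_Mapping.lookup a z + Poly_Mapping.lookup b z\<bar> * ?w z)"
    using l1_norm_eq_sum[OF fin keys] by (simp add: lookup_add)
  also have "\<dots> \<le> (\<Sum>z\<in>?A. \<bar>Poly_Mapping.lookup a z\<bar> * ?w z + \<bar>Poly_Mapping.lookup b z\<bar> * ?w z)"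
    by (rule sum_mono) (metis abs_triangle_ineq distrib_right mult_right_mono norm_ge_zero)
  also have "\<dots> = l1_norm a + l1_norm b"
    using l1_norm_eq_sum[OF fin, of a] l1_norm_eq_sum[OF fin, of b] by (simp add: sum.distrib)
  finally show ?thesis .
qed

lemma l1_norm_scaleR: "l1_norm (c *\<^sub>R a) = \<bar>c\<bar> * l1_norm a"
  using l1_norm_eq_sum[of "Poly_Mapping.keys a" "c *\<^sub>R a", OF _ keys_scaleR_subset]
  by (simp add: lookup_scaleR_poly_mapping l1_norm_def sum_distrib_left abs_mult mult.assoc)

lemma l1_norm_nonneg: "0 \<le> l1_norm a"
  unfolding l1_norm_def by (auto intro: sum_nonneg)

text \<open>Each weighted coordinate is dominated by the l1-norm; this makes the
  coordinate functionals continuous.\<close>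
lemma coordinate_le_l1_norm: "\<bar>Poly_Mapping.lookup a z\<bar> * norm (the_elem z) \<le> l1_norm a"
proof (cases "z \<in> Poly_Mapping.keys a")
  case True then show ?thesis unfolding l1_norm_def by (intro member_le_sum) auto
next
  case False then show ?thesis using l1_norm_nonneg by (simp add: in_keys_iff)
qed

lemma norm_l1_sum_le: "norm (l1_sum a) \<le> l1_norm a"
  unfolding l1_sum_def l1_norm_def by (rule order_trans[OF norm_sum]) simp

lemma l1_norm_eq_0:
  assumes "a \<in> l1_carrier" "l1_norm a = 0"
  shows "a = 0"
proof -
  have "z \<notin> Poly_Mapping.keys a" for z
  proof
    assume z: "z \<in> Poly_Mapping.keys a"
    then obtain x where "x \<noteq> 0" "z = {x}" using assms(1) unfolding l1_carrier_def by auto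
    with z have "0 < \<bar>Poly_Mapping.lookup a z\<bar> * norm (the_elem z)" by (simp add: in_keys_iff)
    with coordinate_le_l1_norm[of a z] assms(2) show False by simp
  qed
  then have "Poly_Mapping.keys a = {}" by blast
  then show ?thesis by simp
qed

lemma is_norm_on_l1: "is_norm_on l1_carrier (l1_norm :: ('p::real_normed_vector set \<Rightarrow>\<^sub>0 real) \<Rightarrow> real)"
proof -
  have "subspace (l1_carrier :: ('p set \<Rightarrow>\<^sub>0 real) set)"
    unfolding subspace_def
  proof (intro conjI ballI allI)
    show "0 \<in> l1_carrier" by (simp add: l1_carrier_def)
    fix a b :: "'p set \<Rightarrow>\<^sub>0 real" and c :: real
    assume "a \<in> l1_carrier" "b \<in> l1_carrier"
    then show "a + b \<in> l1_carrier" "c *\<^sub>R a \<in> l1_carrier"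
      unfolding l1_carrier_def mem_Collect_eq
      by (meson keys_add le_supI order_trans, meson keys_scaleR_subset order_trans)
  qed
  moreover have "l1_norm a = 0 \<longleftrightarrow> a = 0" if "a \<in> l1_carrier" for a :: "'p set \<Rightarrow>\<^sub>0 real"
    using l1_norm_eq_0[OF that] by (auto simp: l1_norm_def)
  ultimately show ?thesis
    unfolding is_norm_on_def by (simp add: l1_norm_nonneg l1_norm_triangle l1_norm_scaleR)
qed

section \<open>Copying a vector space into the ambient function space\<close>

text \<open>Hamel coordinates give a linear injection of any real vector space into the
  finitely supported functions on its subsets (a vector b sits at index {b}).\<close>
lemma linear_injection_into_poly_mapping:
  "\<exists>j :: 'p::real_vector \<Rightarrow> ('p set \<Rightarrow>\<^sub>0 real). linear j \<and> inj j"
proof -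
  obtain B :: "'p set" where B: "independent B" "UNIV \<subseteq> span B"
    using basis_exists[of "UNIV :: 'p set"] by blast
  have spB: "x \<in> span B" for x using B(2) by auto
  define R where "R x z = (if is_singleton z then representation B x (the_elem z) else 0)" for x z
  define j where "j x = Abs_poly_mapping (R x)" for x
  have "finite {z. R x z \<noteq> 0}" for x
  proof (rule finite_subset)
    show "{z. R x z \<noteq> 0} \<subseteq> (\<lambda>b. {b}) ` {b. representation B x b \<noteq> 0}"
      unfolding R_def by (auto simp: is_singleton_def)
  qed (simp add: finite_representation)
  then have lookup_j: "Poly_Mapping.lookup (j x) = R x" for x
    unfolding j_def by simp
  have "linear j"
    by (rule linearI; rule poly_mapping_eqI)
       (simp_all add: lookup_j lookup_add lookup_scaleR_poly_mapping R_def
          representation_add[OF B(1) spB spB] representation_scale[OF B(1) spB])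
  moreover have "x = 0" if "j x = 0" for x
  proof -
    have "representation B x b = 0" for b
      using arg_cong[OF that, of "\<lambda>a. Poly_Mapping.lookup a {b}"] by (simp add: lookup_j R_def)
    then show "x = 0"
      using sum_nonzero_representation_eq[OF B(1) spB, of x] by simp
  qed
  ultimately have "inj j" by (simp add: linear_inj_iff_eq_0)
  with \<open>linear j\<close> show ?thesis by blast
qed

lemma is_norm_on_transported:
  fixes j :: "'p::real_normed_vector \<Rightarrow> 'v::real_vector"
  assumes lin: "linear j" and inj: "inj j"
  shows "is_norm_on (range j) (\<lambda>e. norm (inv j e))"
  unfolding is_norm_on_def
proof (intro conjI ballI allI)
  show "subspace (range j)" using linear_subspace_image[OF lin subspace_UNIV] .
  fix e e' c assume "e \<in> range j" "e' \<in> range j"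
  then obtain x x' where e: "e = j x" "e' = j x'" by blast
  show "0 \<le> norm (inv j e)" by simp
  show "(norm (inv j e) = 0) = (e = 0)"
    using e inj linear_0[OF lin] by (metis inv_f_f norm_eq_zero)
  show "norm (inv j (e + e')) \<le> norm (inv j e) + norm (inv j e')"
    using e inj by (simp flip: linear_add[OF lin] add: norm_triangle_ineq)
  show "norm (inv j (c *\<^sub>R e)) = \<bar>c\<bar> * norm (inv j e)"
    using e inj by (simp flip: linear_scale[OF lin])
qed

section \<open>Projectivity yields a bounded lifting of the identity\<close>

text \<open>The summation map onto the copy of P is a coisometry: it does not increase
  norms, and a nonzero point x lifts to the unit vector at {x} of norm exactly
  norm x.\<close>
lemma coisometric_l1_sum:
  fixes j :: "'p::real_normed_vector \<Rightarrow> 'v::real_vector"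
  assumes "linear j" "inj j"
  shows "coisometric l1_carrier l1_norm (range j) (\<lambda>e. norm (inv j e)) (\<lambda>a. j (l1_sum a))"
  unfolding coisometric_def bounded_op_def
proof (intro conjI ballI allI impI)
  show "(\<lambda>a. j (l1_sum a)) ` l1_carrier \<subseteq> range j" by auto
  show "j (l1_sum (a + b)) = j (l1_sum a) + j (l1_sum b)" for a b
    by (simp add: l1_sum_add linear_add[OF assms(1)])
  show "j (l1_sum (c *\<^sub>R a)) = c *\<^sub>R j (l1_sum a)" for a c
    by (simp add: l1_sum_scaleR linear_scale[OF assms(1)])
  show "norm (inv j (j (l1_sum a))) \<le> l1_norm a" for a
    using assms(2) by (simp add: norm_l1_sum_le)
  then show "\<exists>K. \<forall>a\<in>l1_carrier. norm (inv j (j (l1_sum a))) \<le> K * l1_norm a"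
    by (intro exI[of _ 1]) simp
next
  fix e and \<epsilon> :: real assume "e \<in> range j" "\<epsilon> > 0"
  then obtain x where x: "e = j x" by blast
  show "\<exists>a\<in>l1_carrier. j (l1_sum a) = e \<and> l1_norm a < norm (inv j e) + \<epsilon>"
  proof (cases "x = 0")
    case True
    then show ?thesis using \<open>\<epsilon> > 0\<close> x inv_f_f[OF assms(2), of 0] linear_0[OF assms(1)]
      by (intro bexI[of _ 0]) (auto simp: l1_sum_def l1_norm_def l1_carrier_def)
  next
    case False
    let ?a = "Poly_Mapping.single {x} (1::real)"
    have "?a \<in> l1_carrier" "l1_sum ?a = x" "l1_norm ?a = norm x"
      using False by (auto simp: l1_carrier_def l1_sum_def l1_norm_def)
    then show ?thesis using \<open>\<epsilon> > 0\<close> x assms(2)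
      by (intro bexI[of _ ?a]) auto
  qed
qed

text \<open>For a topologically projective P, the summation map has a bounded linear
  right inverse: lift the embedding j through the coisometry and cancel j.\<close>
lemma projective_lifting:
  assumes "topo_projective_Nor TYPE('p::real_normed_vector)"
  shows "\<exists>\<psi>. bounded_op UNIV norm l1_carrier l1_norm \<psi> \<and> (\<forall>x::'p. l1_sum (\<psi> x) = x)"
proof -
  obtain j :: "'p \<Rightarrow> ('p set \<Rightarrow>\<^sub>0 real)" where j: "linear j" "inj j"
    using linear_injection_into_poly_mapping by blast
  have "bounded_op UNIV norm (range j) (\<lambda>e. norm (inv j e)) j"
    unfolding bounded_op_def using j by (auto simp: linear_add linear_scale intro: exI[of _ 1])
  then obtain \<psi> where \<psi>: "bounded_op UNIV norm l1_carrier l1_norm \<psi>" "\<And>x. j (l1_sum (\<psi> x)) = j x"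
    using assms is_norm_on_l1 is_norm_on_transported[OF j] coisometric_l1_sum[OF j]
    unfolding topo_projective_Nor_def by blast
  then show ?thesis using j(2) by (auto simp: inj_eq)
qed

section \<open>Separability forces countable support\<close>

lemma continuous_coordinate:
  fixes \<psi> :: "'a::real_normed_vector \<Rightarrow> ('p::real_normed_vector set \<Rightarrow>\<^sub>0 real)"
  assumes \<psi>: "bounded_op UNIV norm l1_carrier l1_norm \<psi>"
  shows "continuous_on UNIV (\<lambda>x. Poly_Mapping.lookup (\<psi> x) z)"
proof (cases "\<exists>q. q \<noteq> 0 \<and> z = {q}")
  case True
  then obtain q where q: "q \<noteq> 0" "z = {q}" by blast
  obtain K where K: "\<And>x. l1_norm (\<psi> x) \<le> K * norm x"
    using \<psi> unfolding bounded_op_def by auto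
  have "norm (Poly_Mapping.lookup (\<psi> x) z) \<le> norm x * (K / norm q)" for x
  proof -
    have "\<bar>Poly_Mapping.lookup (\<psi> x) z\<bar> * norm q \<le> K * norm x"
      using coordinate_le_l1_norm[of "\<psi> x" z] K[of x] q by simp
    then show ?thesis using q by (simp add: field_simps)
  qed
  then have "bounded_linear (\<lambda>x. Poly_Mapping.lookup (\<psi> x) z)"
    using \<psi> unfolding bounded_op_def
    by (intro bounded_linear_intro[where K = "K / norm q"]) (auto simp: lookup_add lookup_scaleR_poly_mapping)
  then show ?thesis by (rule linear_continuous_on)
next
  case False
  have "Poly_Mapping.lookup (\<psi> x) z = 0" for x
  proof -
    have "\<psi> x \<in> l1_carrier" using \<psi> unfolding bounded_op_def by auto
    with False have "z \<notin> Poly_Mapping.keys (\<psi> x)" unfolding l1_carrier_def by blast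
    then show ?thesis by (simp add: in_keys_iff)
  qed
  then show ?thesis by simp
qed

text \<open>If P is separable, all values of such an operator are supported in one
  countable set: a coordinate vanishing on a dense set vanishes everywhere.\<close>
lemma countable_common_support:
  fixes \<psi> :: "'a::real_normed_vector \<Rightarrow> ('p::real_normed_vector set \<Rightarrow>\<^sub>0 real)"
  assumes sep: "separable_space (euclidean :: 'a topology)"
    and \<psi>: "bounded_op UNIV norm l1_carrier l1_norm \<psi>"
  shows "\<exists>C. countable C \<and> (\<forall>x. Poly_Mapping.keys (\<psi> x) \<subseteq> C)"
proof -
  obtain D where D: "countable D" "closure D = (UNIV :: 'a set)"
    using sep unfolding separable_space_def by auto
  define C where "C = (\<Union>d\<in>D. Poly_Mapping.keys (\<psi> d))"
  have "countable C" unfolding C_def using D(1) by (intro countable_UN) (auto intro: countable_finite)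
  moreover have "z \<in> C" if z: "z \<in> Poly_Mapping.keys (\<psi> x)" for x z
  proof (rule ccontr)
    assume "z \<notin> C"
    then have "D \<subseteq> {x. Poly_Mapping.lookup (\<psi> x) z = 0}"
      unfolding C_def by (auto simp: in_keys_iff)
    moreover have "closed {x. Poly_Mapping.lookup (\<psi> x) z = 0}"
      using closed_Collect_eq[OF continuous_coordinate[OF \<psi>] continuous_on_const] .
    ultimately have "closure D \<subseteq> {x. Poly_Mapping.lookup (\<psi> x) z = 0}"
      by (rule closure_minimal)
    with D(2) z show False by (auto simp: in_keys_iff)
  qed
  ultimately show ?thesis by blast
qed

theorem proposition2p4:
  assumes "separable_space (euclidean :: 'p::real_normed_vector topology)"
    and "topo_projective_Nor TYPE('p)"
  shows "\<exists>B :: 'p set. independent B \<and> span B = UNIV \<and> countable B"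
proof -
  obtain \<psi> :: "'p \<Rightarrow> ('p set \<Rightarrow>\<^sub>0 real)"
    where \<psi>: "bounded_op UNIV norm l1_carrier l1_norm \<psi>" and right_inv: "\<And>x. l1_sum (\<psi> x) = x"
    using projective_lifting[OF assms(2)] by blast
  obtain C where C: "countable C" "\<And>x. Poly_Mapping.keys (\<psi> x) \<subseteq> C"
    using countable_common_support[OF assms(1) \<psi>] by blast
  obtain B :: "'p set" where B: "independent B" "UNIV \<subseteq> span B"
    using basis_exists[of "UNIV :: 'p set"] by blast
  have "linear \<psi>" using \<psi> unfolding bounded_op_def by (intro linearI) auto
  moreover have "inj \<psi>" by (metis right_inv injI)
  ultimately have "independent (\<psi> ` B)"
    using B(1) by (intro linear_independent_injective_image) (auto intro: inj_on_subset)
  moreover have "\<psi> ` B \<subseteq> span ((\<lambda>z. Poly_Mapping.single z 1) ` C)"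
    using C(2) by (auto intro: in_span_unit_vectors)
  ultimately have "countable (\<psi> ` B)"
    using countable_image[OF C(1)] by (rule countable_independent_in_span)
  then have "countable B" using \<open>inj \<psi>\<close> by (auto intro: countable_image_inj_on inj_on_subset)
  with B show ?thesis by auto
qed

end
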